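(* Consider the universal Dealer $\mathcal D_{\mathrm{universal}}$ with parameters $k_i$, $\ell_i$, $u_i$, $d$ as below. For every epoch $i\in[d]$, the expected number of correct guesses that any Guesser makes during the $i$-th epoch is at most $\ln(\log n+3)$.
   Context: Card guessing game: a deck of $n$ distinct cards labeled $1,\dots,n$; $n$ turns; in each turn the Dealer selects a card from the remaining deck and places it face down, the Guesser names a card of $[n]$, and the card is revealed and discarded. A guess is correct if it equals the drawn card. The Guesser may be arbitrary (any memory, randomness and computation). The universal Dealer (rounding ignored): let $d=\log_{\log n}\big(n/(8e\log^6 n)\big)$, and for $i\in[d]$ let $k_i=n/(8e\log^{1+i} n)$, $\ell_i=k_i(1-1/\log n)$, $u_i=2\ell_i/\log^2 n$. (1) While more than $k_1$ cards remain it draws uniformly random cards from the remaining deck; (2) the $i$-th epoch consists of the $\ell_i$ turns starting when $k_i$ cards remain; at the start of each epoch a set $B$ is set to $\emptyset$; in each turn of the epoch the Dealer draws a uniformly random card of (remaining deck)$\setminus B$, and after the Guesser's guess $g$, if $g$ is still in the remaining deck and $|B|<u_i$, then $g$ is added to $B$; (3) when $\log^4 n$ cards remain it draws uniformly random cards from the remaining deck until the end. Expectations are over the randomness of both players. $\log$ is base 2, $\ln$ natural. *)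

theory Defs
  imports "HOL-Probability.Probability"
begin

text \<open>Parameters of the universal Dealer (log is base 2). Rounding is ignored by
  keeping all thresholds real-valued and comparing the (natural) number of
  remaining cards against them.\<close>

definition LL :: "nat \<Rightarrow> real" where
  "LL n = log 2 (real n)"

definition dd :: "nat \<Rightarrow> real" where
  "dd n = log (LL n) (real n / (8 * exp 1 * LL n ^ 6))"

definition kk :: "nat \<Rightarrow> nat \<Rightarrow> real" where
  "kk n i = real n / (8 * exp 1 * LL n ^ (1 + i))"

definition ll :: "nat \<Rightarrow> nat \<Rightarrow> real" where
  "ll n i = kk n i * (1 - 1 / LL n)"

definition uu :: "nat \<Rightarrow> nat \<Rightarrow> real" where
  "uu n i = 2 * ll n i / LL n ^ 2"

text \<open>A turn played when m cards remain belongs to epoch i (i in [d]) iff it is one of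
  the ell_i turns starting when k_i cards remain, i.e. k_i - ell_i < m <= k_i.\<close>

definition in_epoch :: "nat \<Rightarrow> nat \<Rightarrow> nat \<Rightarrow> bool" where
  "in_epoch n i m \<longleftrightarrow> 1 \<le> i \<and> real i \<le> dd n \<and> kk n i - ll n i < real m \<and> real m \<le> kk n i"

definition epoch_of :: "nat \<Rightarrow> nat \<Rightarrow> nat option" where
  "epoch_of n m = (if \<exists>i. in_epoch n i m then Some (SOME i. in_epoch n i m) else None)"

text \<open>Inside an epoch: uniform over deck - B
  (the fallback when deck - B is empty never occurs in an epoch).\<close>

definition dealer_draw :: "nat \<Rightarrow> nat set \<Rightarrow> nat set \<Rightarrow> nat pmf" where
  "dealer_draw n deck B = (case epoch_of n (card deck) of
      None \<Rightarrow> pmf_of_set deck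
    | Some i \<Rightarrow> (if deck - B = {} then pmf_of_set deck else pmf_of_set (deck - B)))"

text \<open>A Guesser with arbitrary memory type 's is given by an initial
  (random) memory state, a randomized guessing rule gs (producing a guess and new
  memory), and a randomized observation rule obs (updating memory after the card is
  revealed). State: remaining deck, set B, the epoch
  of the previous turn (to reset B at the start of each epoch), Guesser memory.\<close>

fun run :: "nat \<Rightarrow> nat \<Rightarrow> ('s \<Rightarrow> (nat \<times> 's) pmf) \<Rightarrow> ('s \<Rightarrow> nat \<Rightarrow> 's pmf) \<Rightarrow>
    nat \<Rightarrow> nat set \<Rightarrow> nat set \<Rightarrow> nat option \<Rightarrow> 's \<Rightarrow> nat pmf" where
  "run n i gs obs 0 deck B eB s = return_pmf 0"
| "run n i gs obs (Suc t) deck B eB s =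
    (let e = epoch_of n (card deck);
         B0 = (if e = eB then B else {})
     in bind_pmf (dealer_draw n deck B0) (\<lambda>c.
        bind_pmf (gs s) (\<lambda>(g, s1).
        bind_pmf (obs s1 c) (\<lambda>s2.
        let deck' = deck - {c};
            B1 = (case e of None \<Rightarrow> {}
                  | Some j \<Rightarrow> (if g \<in> deck' \<and> real (card B0) < uu n j then insert g B0 else B0))
        in map_pmf (\<lambda>r. r + (if e = Some i \<and> g = c then 1 else 0))
             (run n i gs obs t deck' B1 e s2)))))"

definition correct_in_epoch :: "nat \<Rightarrow> nat \<Rightarrow> 's pmf \<Rightarrow> ('s \<Rightarrow> (nat \<times> 's) pmf) \<Rightarrow>
    ('s \<Rightarrow> nat \<Rightarrow> 's pmf) \<Rightarrow> nat pmf" where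
  "correct_in_epoch n i init gs obs = bind_pmf init (\<lambda>s. run n i gs obs n {1..n} {} None s)"

end

theory Submission
  imports Defs
begin

text \<open>In a turn of epoch i with m cards left the Dealer draws uniformly from the
  deck minus B, and B never reaches u_i + 1 cards; so whatever the Guesser knows,
  its guess is correct with probability at most 1 / (m - u_i - 1). The turns of the
  epoch are those with k_i - l_i < m <= k_i, and comparing the sum of these
  probabilities with the integral of 1/x bounds the expectation by
  ln ((k_i - u_i - 1) / (k_i - l_i - u_i - 2)). Since k_i = (k_i - l_i) log n,
  u_i <= (k_i - l_i) / 2 and k_i - l_i >= (log n)^4, this ratio is at most log n + 3.\<close>

lemma nn_integral_bind_pmf_le:
  assumes "\<And>x. x \<in> set_pmf p \<Longrightarrow> (\<integral>\<^sup>+y. f y \<partial>measure_pmf (q x)) \<le> h x"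
  shows "(\<integral>\<^sup>+y. f y \<partial>measure_pmf (bind_pmf p q)) \<le> (\<integral>\<^sup>+x. h x \<partial>measure_pmf p)"
  unfolding nn_integral_bind_pmf using assms
  by (intro nn_integral_mono_AE) (simp add: AE_measure_pmf_iff)

lemma nn_integral_bind_pmf_le_const:
  assumes "\<And>x. x \<in> set_pmf p \<Longrightarrow> (\<integral>\<^sup>+y. f y \<partial>measure_pmf (q x)) \<le> C"
  shows "(\<integral>\<^sup>+y. f y \<partial>measure_pmf (bind_pmf p q)) \<le> C"
  using nn_integral_bind_pmf_le[of p q f "\<lambda>_. C"] assms
  by (simp add: measure_pmf.emeasure_space_1)

lemma nn_integral_map_add_pmf:
  "(\<integral>\<^sup>+r. ennreal (real r) \<partial>measure_pmf (map_pmf (\<lambda>r. r + k) p))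
     = (\<integral>\<^sup>+r. ennreal (real r) \<partial>measure_pmf p) + ennreal (real k)"
  by (simp add: ennreal_plus[symmetric] del: ennreal_plus)
     (simp add: nn_integral_add measure_pmf.emeasure_space_1)

lemma nn_integral_guess_turn_le:
  fixes D :: "'c pmf" and obs :: "'c \<Rightarrow> 's pmf" and cont :: "'c \<Rightarrow> 's \<Rightarrow> nat pmf"
  assumes "\<And>c s. c \<in> set_pmf D \<Longrightarrow> (\<integral>\<^sup>+r. ennreal (real r) \<partial>measure_pmf (cont c s)) \<le> ennreal F"
  shows "(\<integral>\<^sup>+r. ennreal (real r) \<partial>measure_pmf (bind_pmf D (\<lambda>c. bind_pmf (obs c)
      (\<lambda>s. map_pmf (\<lambda>r. r + (if P \<and> g = c then 1 else 0)) (cont c s)))))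
    \<le> ennreal F + ennreal (if P then pmf D g else 0)"
proof -
  define hit :: "'c \<Rightarrow> nat" where "hit c = (if P \<and> g = c then 1 else 0)" for c
  have "(\<integral>\<^sup>+r. ennreal (real r) \<partial>measure_pmf (bind_pmf D (\<lambda>c. bind_pmf (obs c)
      (\<lambda>s. map_pmf (\<lambda>r. r + hit c) (cont c s)))))
    \<le> (\<integral>\<^sup>+c. ennreal F + ennreal (real (hit c)) \<partial>measure_pmf D)"
    using assms by (intro nn_integral_bind_pmf_le nn_integral_bind_pmf_le_const)
      (simp only: nn_integral_map_add_pmf add_right_mono)
  also have "\<dots> = ennreal F + (\<integral>\<^sup>+c. ennreal (real (hit c)) \<partial>measure_pmf D)"
    by (simp add: nn_integral_add measure_pmf.emeasure_space_1)
  also have "(\<integral>\<^sup>+c. ennreal (real (hit c)) \<partial>measure_pmf D) = ennreal (if P then pmf D g else 0)"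
  proof (cases P)
    case True
    then have "(\<integral>\<^sup>+c. ennreal (real (hit c)) \<partial>measure_pmf D) = (\<integral>\<^sup>+c. indicator {g} c \<partial>measure_pmf D)"
      by (intro nn_integral_cong) (simp add: hit_def indicator_def)
    with True show ?thesis
      by (simp add: emeasure_pmf_single)
  qed (simp add: hit_def)
  finally show ?thesis
    by (simp add: hit_def)
qed

lemma expectation_le_of_nn_integral_le:
  fixes p :: "nat pmf"
  assumes "(\<integral>\<^sup>+r. ennreal (real r) \<partial>measure_pmf p) \<le> ennreal C" and "0 \<le> C"
  shows "measure_pmf.expectation p real \<le> C"
proof -
  have "measure_pmf.expectation p real = enn2real (\<integral>\<^sup>+r. ennreal (real r) \<partial>measure_pmf p)"
    by (rule integral_eq_nn_integral) auto
  also have "\<dots> \<le> C"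
    using assms by (intro enn2real_leI) auto
  finally show ?thesis .
qed

lemma inverse_le_ln_diff:
  fixes y :: real
  assumes "1 < y"
  shows "1 / y \<le> ln y - ln (y - 1)"
proof -
  have "ln ((y - 1) / y) \<le> (y - 1) / y - 1"
    using assms by (intro ln_le_minus_one) auto
  also have "\<dots> = - 1 / y"
    using assms by (simp add: field_simps)
  finally show ?thesis
    using assms by (simp add: ln_div)
qed

lemma sum_inverse_le_ln_ratio:
  fixes a k v :: real
  assumes "1 < a - v" and "a \<le> k" and window: "\<And>m. P m \<Longrightarrow> a < real m \<and> real m \<le> k"
  shows "(\<Sum>m=1..t. if P m then 1 / (real m - v) else 0) \<le> ln (k - v) - ln (a - 1 - v)"
proof -
  \<comment> \<open>ln (t - v) clamped to the window; it grows by at least 1 / (t + 1 - v) whenever P (t + 1)\<close>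
  define G where "G t = ln (max (min (real t) k - v) (a - 1 - v))" for t :: nat
  have G_mono: "G t \<le> G (Suc t)" for t
    using assms(1) by (auto simp: G_def max_def min_def)
  have partial_sums: "(\<Sum>m=1..t. if P m then 1 / (real m - v) else 0) \<le> G t - ln (a - 1 - v)" for t
  proof (induction t)
    case 0
    then show ?case
      using assms(1) by (simp add: G_def)
  next
    case (Suc t)
    show ?case
    proof (cases "P (Suc t)")
      case True
      with window have "a < real t + 1" "real t + 1 \<le> k" by force+
      then have "G t = ln (real (Suc t) - v - 1)" "G (Suc t) = ln (real (Suc t) - v)"
        using assms(1) by (auto simp: G_def max_def min_def)
      with Suc.IH True \<open>a < real t + 1\<close> assms(1) inverse_le_ln_diff[of "real (Suc t) - v"]
      show ?thesis by simp
    qed (use Suc.IH G_mono[of t] in simp)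
  qed
  moreover have "G t \<le> ln (k - v)"
    using assms(1,2) by (auto simp: G_def)
  ultimately show ?thesis
    using partial_sums[of t] by linarith
qed

lemma epoch_of_SomeD:
  assumes "epoch_of n m = Some i"
  shows "kk n i - ll n i < real m" and "real m \<le> kk n i"
proof -
  have "in_epoch n i m"
    using assms unfolding epoch_of_def by (metis option.distinct(1) option.inject someI_ex)
  then show "kk n i - ll n i < real m" and "real m \<le> kk n i"
    by (simp_all add: in_epoch_def)
qed

lemma set_pmf_dealer_draw:
  assumes "finite deck" "deck \<noteq> {}"
  shows "set_pmf (dealer_draw n deck B) \<subseteq> deck"
  using assms unfolding dealer_draw_def by (auto split: option.splits)

lemma pmf_dealer_draw_le:
  assumes "epoch_of n (card deck) = Some j" "finite deck" "finite B"
    and "real (card B) < c" "c < real (card deck)"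
  shows "pmf (dealer_draw n deck B) g \<le> 1 / (real (card deck) - c)"
proof -
  have "card deck - card B \<le> card (deck - B)"
    using \<open>finite B\<close> by (rule diff_card_le_card_Diff)
  with assms(4,5) have large: "real (card deck) - c < real (card (deck - B))"
    by linarith
  with assms(5) have "deck - B \<noteq> {}"
    by (metis card.empty diff_gt_0_iff_gt of_nat_0 order.asym)
  with assms(1) have "dealer_draw n deck B = pmf_of_set (deck - B)"
    unfolding dealer_draw_def by simp
  with \<open>deck - B \<noteq> {}\<close> \<open>finite deck\<close>
  have "pmf (dealer_draw n deck B) g \<le> 1 / real (card (deck - B))"
    by (simp add: indicator_def)
  also have "\<dots> \<le> 1 / (real (card deck) - c)"
    using large assms(5) by (intro divide_left_mono) auto
  finally show ?thesis .
qed

definition hit_bound :: "nat \<Rightarrow> nat \<Rightarrow> nat \<Rightarrow> real" where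
  "hit_bound n i m = (if epoch_of n m = Some i then 1 / (real m - uu n i - 1) else 0)"

lemma run_expected_hits_le:
  fixes gs :: "'s \<Rightarrow> (nat \<times> 's) pmf" and obs :: "'s \<Rightarrow> nat \<Rightarrow> 's pmf"
  assumes u_nonneg: "0 \<le> uu n i"
    and epoch_large: "\<And>m. epoch_of n m = Some i \<Longrightarrow> uu n i + 1 < real m"
    and "finite deck" "card deck = t" "finite B" "eB = Some i \<Longrightarrow> real (card B) < uu n i + 1"
  shows "(\<integral>\<^sup>+r. ennreal (real r) \<partial>measure_pmf (run n i gs obs t deck B eB s))
      \<le> ennreal (\<Sum>m=1..t. hit_bound n i m)"
  using assms(3-)
proof (induction t arbitrary: deck B eB s)
  case 0
  then show ?case by simp
next
  case (Suc t)
  define e where "e = epoch_of n (card deck)"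
  define B0 where "B0 = (if e = eB then B else {})"
  define B1 where "B1 g c = (case e of None \<Rightarrow> {}
    | Some j \<Rightarrow> (if g \<in> deck - {c} \<and> real (card B0) < uu n j then insert g B0 else B0))" for g c
  define D where "D = dealer_draw n deck B0"
  define F where "F = (\<Sum>m=1..t. hit_bound n i m)"
  have hit_bound_nonneg: "0 \<le> hit_bound n i m" for m
    using epoch_large[of m] by (auto simp: hit_bound_def)
  have finite_B0: "finite B0" and card_B0: "e = Some i \<Longrightarrow> real (card B0) < uu n i + 1"
    using Suc.prems(3,4) u_nonneg by (auto simp: B0_def)
  define rest where "rest g c s2 = run n i gs obs t (deck - {c}) (B1 g c) e s2" for g c s2
  \<comment> \<open>the guess does not depend on the face-down card, so it may be drawn first\<close>
  have run_eq: "run n i gs obs (Suc t) deck B eB s = bind_pmf (gs s) (\<lambda>(g, s1).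
      bind_pmf D (\<lambda>c. bind_pmf (obs s1 c) (\<lambda>s2.
        map_pmf (\<lambda>r. r + (if e = Some i \<and> g = c then 1 else 0)) (rest g c s2))))"
    unfolding run.simps Let_def rest_def B1_def D_def B0_def e_def
    by (subst bind_commute_pmf) (simp add: case_prod_unfold)
  have IH: "(\<integral>\<^sup>+r. ennreal (real r) \<partial>measure_pmf (rest g c s2)) \<le> ennreal F"
    if "c \<in> set_pmf D" for g c s2
  proof -
    have "c \<in> deck"
      using that set_pmf_dealer_draw[of deck] Suc.prems(1,2) by (force simp: D_def)
    then show ?thesis
      unfolding F_def rest_def using Suc.prems(1,2) finite_B0 card_B0
      by (intro Suc.IH) (auto simp: B1_def card_insert_if split: option.splits)
  qed
  have hit_prob: "pmf D g \<le> hit_bound n i (Suc t)" if "e = Some i" for g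
  proof -
    have "pmf D g \<le> 1 / (real (card deck) - (uu n i + 1))"
      unfolding D_def using that epoch_large[of "card deck"] Suc.prems(1) finite_B0 card_B0
      by (intro pmf_dealer_draw_le) (auto simp: e_def)
    with that Suc.prems(2) show ?thesis
      by (simp add: hit_bound_def e_def)
  qed
  have "(\<integral>\<^sup>+r. ennreal (real r) \<partial>measure_pmf (run n i gs obs (Suc t) deck B eB s))
      \<le> ennreal F + ennreal (hit_bound n i (Suc t))"
    unfolding run_eq
    by (intro nn_integral_bind_pmf_le_const, clarify, rule order_trans[OF nn_integral_guess_turn_le])
      (auto intro: IH add_left_mono simp: ennreal_leI hit_prob)
  also have "\<dots> = ennreal (\<Sum>m=1..Suc t. hit_bound n i m)"
    using hit_bound_nonneg by (simp add: F_def sum_nonneg flip: ennreal_plus)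
  finally show ?case .
qed

lemma epoch_params:
  assumes "1 \<le> i" and "real i \<le> dd n"
  shows "4 \<le> LL n" and "LL n ^ 4 \<le> kk n i - ll n i"
proof -
  have "n \<ge> 3"
  proof (rule ccontr)
    assume "\<not> n \<ge> 3"
    then have "n = 0 \<or> n = 1 \<or> n = 2"
      by auto
    then have "dd n = 0"
      by (auto simp: dd_def LL_def log_def)
    with assms show False by simp
  qed
  define L where "L = LL n"
  have "1 < L"
    unfolding L_def LL_def using \<open>n \<ge> 3\<close> by (subst less_log_iff) auto
  have "0 < real n / (8 * exp 1 * L ^ 6)"
    using \<open>n \<ge> 3\<close> \<open>1 < L\<close> by auto
  with assms(2) \<open>1 < L\<close> have "L ^ i \<le> real n / (8 * exp 1 * L ^ 6)"
    by (simp add: dd_def L_def[symmetric] le_log_iff powr_realpow)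
  then have n_large: "8 * exp 1 * L ^ (i + 6) \<le> real n"
    using \<open>1 < L\<close> by (simp add: field_simps power_add)
  have "8 * exp 1 * 1 \<le> 8 * exp 1 * L ^ (i + 6)"
    using \<open>1 < L\<close> by (intro mult_left_mono one_le_power) auto
  with n_large have "8 * exp 1 \<le> real n"
    by linarith
  with exp_ge_add_one_self[of 1] have "2 ^ 4 \<le> real n"
    by simp
  then show "4 \<le> LL n"
    unfolding LL_def by (subst le_log_iff) auto
  have "kk n i - ll n i = real n / (8 * exp 1 * L ^ (i + 2))"
    unfolding kk_def ll_def L_def[symmetric] using \<open>1 < L\<close> by (simp add: field_simps)
  also have "L ^ 4 \<le> real n / (8 * exp 1 * L ^ (i + 2))"
  proof -
    have "L ^ (i + 6) = L ^ 4 * L ^ (i + 2)"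
      by (simp only: power_add[symmetric]) (simp add: add.commute)
    with n_large \<open>1 < L\<close> show ?thesis
      by (simp add: pos_le_divide_eq mult_ac)
  qed
  finally show "LL n ^ 4 \<le> kk n i - ll n i"
    by (simp add: L_def)
qed

lemma epoch_window_algebra:
  fixes L a u :: real
  assumes "4 \<le> L" and "L ^ 4 \<le> a" and u_def: "u = 2 * a * (L - 1) / L ^ 2"
  shows "0 \<le> u" and "u + 2 < a" and "a * L - u - 1 \<le> (L + 3) * (a - u - 2)"
proof -
  define w where "w = 2 * (L - 1) / L ^ 2"
  have u_eq: "u = a * w"
    by (simp add: u_def w_def)
  have "0 \<le> w"
    using assms(1) by (simp add: w_def)
  have "4 * L \<le> L * L"
    using assms(1) by (intro mult_right_mono) auto
  have "w \<le> 1 / 2" and "(L + 2) * w \<le> 5 / 2"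
    using assms(1) by (simp_all add: w_def field_simps power2_eq_square)
      (use \<open>4 * L \<le> L * L\<close> in linarith)+
  have "4 ^ 3 * L \<le> L ^ 3 * L"
    using assms(1) by (intro mult_right_mono power_mono) auto
  with assms(2) have "64 * L \<le> a"
    by (simp add: power_Suc2[of L 3, simplified, symmetric])
  have "0 \<le> a"
    using \<open>64 * L \<le> a\<close> assms(1) by simp
  show "0 \<le> u"
    using \<open>0 \<le> a\<close> \<open>0 \<le> w\<close> by (simp add: u_eq)
  have "u \<le> a * (1 / 2)"
    unfolding u_eq using \<open>w \<le> 1 / 2\<close> \<open>0 \<le> a\<close> by (rule mult_left_mono)
  moreover have "(L + 2) * u \<le> a * (5 / 2)"
    using mult_left_mono[OF \<open>(L + 2) * w \<le> 5 / 2\<close> \<open>0 \<le> a\<close>] by (simp add: u_eq mult_ac)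
  ultimately show "u + 2 < a" and "a * L - u - 1 \<le> (L + 3) * (a - u - 2)"
    using \<open>64 * L \<le> a\<close> assms(1) by (simp_all add: algebra_simps)
qed

lemma epoch_window:
  assumes "1 \<le> i" and "real i \<le> dd n"
  shows "0 \<le> uu n i" and "0 \<le> ll n i" and "uu n i + 2 < kk n i - ll n i"
    and "kk n i - uu n i - 1 \<le> (LL n + 3) * (kk n i - ll n i - uu n i - 2)"
proof -
  define L a where "L = LL n" and "a = kk n i - ll n i"
  have "4 \<le> L" and "L ^ 4 \<le> a"
    using epoch_params[OF assms] by (simp_all add: L_def a_def)
  then have "0 \<le> a"
    using zero_le_power[of L 4] by linarith
  have "a = kk n i / L"
    by (simp add: a_def ll_def L_def right_diff_distrib)
  then have kk: "kk n i = a * L"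
    using \<open>4 \<le> L\<close> by simp
  then have ll: "ll n i = a * (L - 1)"
    by (simp add: a_def algebra_simps)
  then have "uu n i = 2 * a * (L - 1) / L ^ 2"
    by (simp add: uu_def L_def)
  note bounds = epoch_window_algebra[OF \<open>4 \<le> L\<close> \<open>L ^ 4 \<le> a\<close> this]
  show "0 \<le> uu n i" and "0 \<le> ll n i"
    using bounds(1) \<open>0 \<le> a\<close> \<open>4 \<le> L\<close> by (simp_all add: ll)
  show "uu n i + 2 < kk n i - ll n i"
    and "kk n i - uu n i - 1 \<le> (LL n + 3) * (kk n i - ll n i - uu n i - 2)"
    using bounds(2,3) unfolding a_def[symmetric] L_def[symmetric] by (simp_all only: kk)
qed

lemma sum_hit_bound_le_ln:
  assumes "1 \<le> i" and "real i \<le> dd n"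
  shows "(\<Sum>m=1..t. hit_bound n i m) \<le> ln (LL n + 3)"
proof -
  define a k v where "a = kk n i - ll n i" and "k = kk n i" and "v = uu n i + 1"
  have shifted: "a - 1 - v = kk n i - ll n i - uu n i - 2" "k - v = kk n i - uu n i - 1"
    by (simp_all add: a_def k_def v_def)
  have window: "0 < a - 1 - v" "a \<le> k" "k - v \<le> (LL n + 3) * (a - 1 - v)"
    using epoch_window[OF assms] unfolding shifted by (simp_all add: a_def k_def)
  have "hit_bound n i m = (if epoch_of n m = Some i then 1 / (real m - v) else 0)" for m
    by (simp add: hit_bound_def v_def diff_diff_eq)
  then have "(\<Sum>m=1..t. hit_bound n i m) \<le> ln (k - v) - ln (a - 1 - v)"
    using window(1,2) epoch_of_SomeD[where n = n and i = i, folded a_def k_def]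
    by (simp only:) (rule sum_inverse_le_ln_ratio, auto)
  also have "ln (k - v) \<le> ln ((LL n + 3) * (a - 1 - v))"
    using window epoch_params(1)[OF assms] by (subst ln_le_cancel_iff) auto
  also have "\<dots> = ln (LL n + 3) + ln (a - 1 - v)"
    using window(1) epoch_params(1)[OF assms] by (simp add: ln_mult)
  finally show ?thesis
    by simp
qed

theorem mainTheorem15:
  fixes n i :: nat
    and init :: "'s pmf"
    and gs :: "'s \<Rightarrow> (nat \<times> 's) pmf"
    and obs :: "'s \<Rightarrow> nat \<Rightarrow> 's pmf"
  assumes "1 \<le> i" and "real i \<le> dd n"
  shows "measure_pmf.expectation (correct_in_epoch n i init gs obs) real \<le> ln (LL n + 3)"
proof (rule expectation_le_of_nn_integral_le)
  have epoch_large: "uu n i + 1 < real m" if "epoch_of n m = Some i" for m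
    using epoch_window(3)[OF assms] epoch_of_SomeD(1)[OF that] by linarith
  have "(\<integral>\<^sup>+r. ennreal (real r) \<partial>measure_pmf (run n i gs obs n {1..n} {} None s))
      \<le> ennreal (ln (LL n + 3))" for s
  proof -
    have "(\<integral>\<^sup>+r. ennreal (real r) \<partial>measure_pmf (run n i gs obs n {1..n} {} None s))
        \<le> ennreal (\<Sum>m=1..n. hit_bound n i m)"
      by (rule run_expected_hits_le) (use epoch_window(1)[OF assms] epoch_large in auto)
    also have "\<dots> \<le> ennreal (ln (LL n + 3))"
      by (intro ennreal_leI sum_hit_bound_le_ln[OF assms])
    finally show ?thesis .
  qed
  then show "(\<integral>\<^sup>+r. ennreal (real r) \<partial>measure_pmf (correct_in_epoch n i init gs obs))
      \<le> ennreal (ln (LL n + 3))"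
    unfolding correct_in_epoch_def by (rule nn_integral_bind_pmf_le_const)
  show "0 \<le> ln (LL n + 3)"
    using epoch_params(1)[OF assms] by simp
qed

end
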